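(* Under the setting of the context (with $\lambda>0$, $\delta>0$), let $(x_t)_{t\ge0}$ be generated by RGD with step sizes chosen either by line minimization or by Armijo backtracking. Then: (i) every accumulation point $x_*$ of $(x_t)$ is a stationary point, i.e. $\operatorname{grad} f(x_* )=0$; (ii) there is a constant $\bar C>0$ such that for every $\epsilon>0$, there is an index $t\le \lceil (f(x_0)-f_{\inf})/(\bar C\epsilon^2)\rceil$ with $\|\operatorname{grad} f(x_t)\|_{x_t}\le\epsilon$, where $f_{\inf}=\inf_{\mathcal{M}}f$.
   Context: Fix integers $k\ge 2$, $R\ge 1$, $m_1,\dots,m_k\ge1$. Let $\mathcal{M}=\mathbb{R}^{m_1\times R}\times\cdots\times\mathbb{R}^{m_k\times R}$, with points $U=(U^{(1)},\dots,U^{(k)})$; its tangent space at every point is $\mathcal{M}$ itself. For $U\in\mathcal{M}$, let $[\![U^{(1)},\dots,U^{(k)}]\!]:=\sum_{r=1}^R U^{(1)}_{:,r}\circ\cdots\circ U^{(k)}_{:,r}\in\mathbb{R}^{m_1\times\cdots\times m_k}$ (sum of outer products of corresponding columns). Let $\mathcal{T}^\star\in\mathbb{R}^{m_1\times\cdots\times m_k}$, let $\Omega\subseteq [m_1]\times\cdots\times[m_k]$ be nonempty, $p=|\Omega|/(m_1\cdots m_k)$, and $P_\Omega$ the operator keeping entries indexed by $\Omega$ and zeroing the others. Let $\lambda>0$ and $$f(U)=\frac{1}{2p}\|P_\Omega([\![U^{(1)},\dots,U^{(k)}]\!]-\mathcal{T}^\star)\|_F^2+\frac{\lambda}{2}\sum_{i=1}^k\|U^{(i)}\|_F^2.$$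 For $i=1,\dots,k$, let $K_i(U)=U^{(k)}\odot\cdots\odot U^{(i+1)}\odot U^{(i-1)}\odot\cdots\odot U^{(1)}$ (Khatri–Rao product, i.e. columnwise Kronecker product), and for fixed $\delta>0$ let $H_i(U)=K_i(U)^TK_i(U)+\delta I_R$. The Riemannian metric on $\mathcal{M}$ is $g_U(\xi,\eta)=\sum_{i=1}^k\operatorname{tr}(\xi^{(i)}H_i(U)(\eta^{(i)})^T)$, with norm $\|\xi\|_U=\sqrt{g_U(\xi,\xi)}$. The Riemannian gradient is $\operatorname{grad} f(U)=(\partial_{U^{(1)}}f(U)H_1(U)^{-1},\dots,\partial_{U^{(k)}}f(U)H_k(U)^{-1})$, where $\partial_{U^{(i)}}f$ is the ordinary partial (Euclidean) gradient. RGD: given $x_0\in\mathcal{M}$, set $\eta_t=-\operatorname{grad} f(x_t)$ and $x_{t+1}=x_t+s_t\eta_t$. Step-size rules: (line minimization) $s_t\in\arg\min_{s>0} f(x_t+s\eta_t)$; (Armijo backtracking) with fixed $\sigma,\beta\in(0,1)$ and $s_{\min}>0$, a trial step $s_t^0>0$ is set ($s_t^0=1$ for $t\le1$, and $s_t^0=2(f(x_{t-1})-f(x_{t-2}))/g_{x_{t-1}}(\eta_{t-1},\operatorname{grad} f(x_{t-1}))$ for $t\ge2$), and $s_t=\max(s_t^0\beta^\ell,s_{\min})$ where $\ell\ge0$ is the smallest integer (assumed to exist) such that $f(x_t)-f(x_t+s_t\eta_t)\ge\sigma s_t\, g_{x_t}(-\operatorname{grad} f(x_t),\eta_t)$. 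*)

theory Defs
  imports "HOL-Analysis.Analysis"
begin

text \<open>Modes are indexed 0..k-1 (paper: 1..k), rows of the factor
matrix U^(i) by 0..m i - 1, columns by 0..R-1.  A point of the manifold
M = R^(m_1 x R) x ... x R^(m_k x R) is a function U :: nat => nat => nat => real,
with U i a r the (a,r) entry of U^(i); entries outside the index ranges are 0.
A tensor in R^(m_1 x ... x m_k) is a function on multi-indices j :: nat => nat.\<close>

type_synonym pt = "nat \<Rightarrow> nat \<Rightarrow> nat \<Rightarrow> real"

definition mpts :: "nat \<Rightarrow> (nat \<Rightarrow> nat) \<Rightarrow> nat \<Rightarrow> pt set" where
  "mpts k m R = {U. \<forall>i a r. (k \<le> i \<or> m i \<le> a \<or> R \<le> r) \<longrightarrow> U i a r = 0}"

definition mindex :: "nat \<Rightarrow> (nat \<Rightarrow> nat) \<Rightarrow> (nat \<Rightarrow> nat) set" where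
  "mindex k m = PiE {..<k} (\<lambda>i. {..<m i})"

definition cpt :: "nat \<Rightarrow> nat \<Rightarrow> pt \<Rightarrow> (nat \<Rightarrow> nat) \<Rightarrow> real" where
  "cpt k R U j = (\<Sum>r<R. \<Prod>i<k. U i (j i) r)"

definition pmove :: "pt \<Rightarrow> pt \<Rightarrow> real \<Rightarrow> pt" where
  "pmove U \<eta> s = (\<lambda>i a r. U i a r + s * \<eta> i a r)"

definition pneg :: "pt \<Rightarrow> pt" where
  "pneg \<eta> = (\<lambda>i a r. - \<eta> i a r)"

definition obj :: "nat \<Rightarrow> (nat \<Rightarrow> nat) \<Rightarrow> nat \<Rightarrow> ((nat \<Rightarrow> nat) \<Rightarrow> real)
    \<Rightarrow> (nat \<Rightarrow> nat) set \<Rightarrow> real \<Rightarrow> pt \<Rightarrow> real" where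
  "obj k m R T \<Omega> lam U =
     (let p = real (card \<Omega>) / real (card (mindex k m)) in
      1 / (2 * p) * (\<Sum>j\<in>\<Omega>. (cpt k R U j - T j)\<^sup>2)
      + lam / 2 * (\<Sum>i<k. \<Sum>a<m i. \<Sum>r<R. (U i a r)\<^sup>2))"

definition egrad :: "(pt \<Rightarrow> real) \<Rightarrow> pt \<Rightarrow> pt" where
  "egrad F U = (\<lambda>i a r. deriv (\<lambda>s. F (\<lambda>i' a' r'. U i' a' r' +
       (if i' = i \<and> a' = a \<and> r' = r then s else 0))) 0)"

text \<open>Khatri-Rao product K_i(U) = U^(k) (.) ... (.) U^(i+1) (.) U^(i-1) (.) ... (.) U^(1):
rows indexed by multi-indices over the modes l \<noteq> i, columns by r.\<close>
definition krao :: "nat \<Rightarrow> pt \<Rightarrow> nat \<Rightarrow> (nat \<Rightarrow> nat) \<Rightarrow> nat \<Rightarrow> real" where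
  "krao k U i j r = (\<Prod>l\<in>{..<k} - {i}. U l (j l) r)"

definition Hmat :: "nat \<Rightarrow> (nat \<Rightarrow> nat) \<Rightarrow> real \<Rightarrow> pt \<Rightarrow> nat \<Rightarrow> nat \<Rightarrow> nat \<Rightarrow> real" where
  "Hmat k m del U i r r' =
     (\<Sum>j\<in>PiE ({..<k} - {i}) (\<lambda>l. {..<m l}). krao k U i j r * krao k U i j r')
     + (if r = r' then del else 0)"

definition rmetric :: "nat \<Rightarrow> (nat \<Rightarrow> nat) \<Rightarrow> nat \<Rightarrow> real \<Rightarrow> pt \<Rightarrow> pt \<Rightarrow> pt \<Rightarrow> real" where
  "rmetric k m R del U \<xi> \<eta> =
     (\<Sum>i<k. \<Sum>a<m i. \<Sum>r<R. \<Sum>r'<R. \<xi> i a r * Hmat k m del U i r r' * \<eta> i a r')"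

definition rnorm :: "nat \<Rightarrow> (nat \<Rightarrow> nat) \<Rightarrow> nat \<Rightarrow> real \<Rightarrow> pt \<Rightarrow> pt \<Rightarrow> real" where
  "rnorm k m R del U \<xi> = sqrt (rmetric k m R del U \<xi> \<xi>)"

definition rgrad :: "nat \<Rightarrow> (nat \<Rightarrow> nat) \<Rightarrow> nat \<Rightarrow> real \<Rightarrow> (pt \<Rightarrow> real) \<Rightarrow> pt \<Rightarrow> pt" where
  "rgrad k m R del F U = (THE \<xi>. \<xi> \<in> mpts k m R \<and>
     (\<forall>i<k. \<forall>a<m i. \<forall>r<R. (\<Sum>r'<R. \<xi> i a r' * Hmat k m del U i r' r) = egrad F U i a r))"

definition fnorm :: "nat \<Rightarrow> (nat \<Rightarrow> nat) \<Rightarrow> nat \<Rightarrow> pt \<Rightarrow> real" where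
  "fnorm k m R U = sqrt (\<Sum>i<k. \<Sum>a<m i. \<Sum>r<R. (U i a r)\<^sup>2)"

definition accum_pt :: "nat \<Rightarrow> (nat \<Rightarrow> nat) \<Rightarrow> nat \<Rightarrow> (nat \<Rightarrow> pt) \<Rightarrow> pt \<Rightarrow> bool" where
  "accum_pt k m R x y \<longleftrightarrow> y \<in> mpts k m R \<and>
     (\<exists>\<phi>::nat \<Rightarrow> nat. strict_mono \<phi> \<and>
        (\<lambda>n. fnorm k m R (\<lambda>i a r. x (\<phi> n) i a r - y i a r)) \<longlonglongrightarrow> 0)"

definition rgd_iter :: "nat \<Rightarrow> (nat \<Rightarrow> nat) \<Rightarrow> nat \<Rightarrow> real \<Rightarrow> (pt \<Rightarrow> real)
    \<Rightarrow> (nat \<Rightarrow> pt) \<Rightarrow> (nat \<Rightarrow> real) \<Rightarrow> bool" where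
  "rgd_iter k m R del F x s \<longleftrightarrow> x 0 \<in> mpts k m R \<and>
     (\<forall>t. x (Suc t) = pmove (x t) (pneg (rgrad k m R del F (x t))) (s t))"

definition linemin_rule :: "nat \<Rightarrow> (nat \<Rightarrow> nat) \<Rightarrow> nat \<Rightarrow> real \<Rightarrow> (pt \<Rightarrow> real)
    \<Rightarrow> (nat \<Rightarrow> pt) \<Rightarrow> (nat \<Rightarrow> real) \<Rightarrow> bool" where
  "linemin_rule k m R del F x s \<longleftrightarrow>
     (\<forall>t. s t > 0 \<and> (\<forall>s'>0.
        F (pmove (x t) (pneg (rgrad k m R del F (x t))) (s t))
          \<le> F (pmove (x t) (pneg (rgrad k m R del F (x t))) s')))"

definition armijo_trial :: "nat \<Rightarrow> (nat \<Rightarrow> nat) \<Rightarrow> nat \<Rightarrow> real \<Rightarrow> (pt \<Rightarrow> real)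
    \<Rightarrow> (nat \<Rightarrow> pt) \<Rightarrow> nat \<Rightarrow> real" where
  "armijo_trial k m R del F x t =
     (if t \<le> 1 then 1
      else 2 * (F (x (t - 1)) - F (x (t - 2))) /
           rmetric k m R del (x (t - 1)) (pneg (rgrad k m R del F (x (t - 1))))
                   (rgrad k m R del F (x (t - 1))))"

definition armijo_cond :: "nat \<Rightarrow> (nat \<Rightarrow> nat) \<Rightarrow> nat \<Rightarrow> real \<Rightarrow> (pt \<Rightarrow> real)
    \<Rightarrow> real \<Rightarrow> pt \<Rightarrow> real \<Rightarrow> bool" where
  "armijo_cond k m R del F \<sigma> U st \<longleftrightarrow>
     F U - F (pmove U (pneg (rgrad k m R del F U)) st)
       \<ge> \<sigma> * st * rmetric k m R del U (pneg (rgrad k m R del F U)) (pneg (rgrad k m R del F U))"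

definition armijo_rule :: "nat \<Rightarrow> (nat \<Rightarrow> nat) \<Rightarrow> nat \<Rightarrow> real \<Rightarrow> (pt \<Rightarrow> real)
    \<Rightarrow> real \<Rightarrow> real \<Rightarrow> real \<Rightarrow> (nat \<Rightarrow> pt) \<Rightarrow> (nat \<Rightarrow> real) \<Rightarrow> bool" where
  "armijo_rule k m R del F \<sigma> \<beta> smin x s \<longleftrightarrow>
     (\<forall>t. (\<exists>l::nat. armijo_cond k m R del F \<sigma> (x t)
                     (max (armijo_trial k m R del F x t * \<beta> ^ l) smin)) \<and>
          s t = max (armijo_trial k m R del F x t *
                      \<beta> ^ (LEAST l::nat. armijo_cond k m R del F \<sigma> (x t)
                              (max (armijo_trial k m R del F x t * \<beta> ^ l) smin))) smin)"

end

theory Submission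
  imports Defs "Jordan_Normal_Form.Determinant"
begin

text \<open>Each \<open>H\<^sub>i(U) = K\<^sub>i(U)\<^sup>T K\<^sub>i(U) + \<delta> I\<close> dominates \<open>\<delta> I\<close>, so the Riemannian gradient is well defined
  and \<open>\<delta> \<bar>\<xi>\<bar>\<^sub>F\<^sup>2 \<le> \<parallel>\<xi>\<parallel>\<^sub>U\<^sup>2\<close>. Because \<open>\<lambda> > 0\<close>, the sublevel set \<open>{f \<le> f(x\<^sub>0)}\<close> is bounded, and
  on it the residuals and Riemannian gradients are bounded too; a second-order expansion of the
  polynomial \<open>f\<close> along lines then gives one step size \<open>s\<close> with
  \<open>f(U - s grad f(U)) \<le> f(U) - c \<parallel>grad f(U)\<parallel>\<^sub>U\<^sup>2\<close> on the whole sublevel set. Line minimization does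
  at least as well, and an accepted Armijo step gives the same with \<open>c = \<sigma> s\<^sub>m\<^sub>i\<^sub>n\<close>. Telescoping
  this decrease yields the \<open>O(1/\<epsilon>\<^sup>2)\<close> iteration bound and \<open>\<parallel>grad f(x\<^sub>t)\<parallel> \<rightarrow> 0\<close>; along a subsequence
  converging to \<open>x\<^sub>*\<close>, the Euclidean gradient \<open>grad f(x\<^sub>t) H(x\<^sub>t)\<close> then tends both to \<open>0\<close> and to the
  Euclidean gradient at \<open>x\<^sub>*\<close>, so \<open>grad f(x\<^sub>*) = 0\<close>.\<close>

section \<open>The Riemannian gradient\<close>

lemma square_system_solvable:
  fixes H :: "nat \<Rightarrow> nat \<Rightarrow> 'a::field" and n :: nat and e :: "nat \<Rightarrow> 'a"
  assumes kernel: "\<And>v. \<forall>r<n. (\<Sum>r'<n. v r' * H r' r) = 0 \<Longrightarrow> \<forall>r<n. v r = 0"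
  shows "\<exists>v. \<forall>r<n. (\<Sum>r'<n. v r' * H r' r) = e r"
proof -
  define A where "A = mat n n (\<lambda>(r, r'). H r' r)"
  have A: "A \<in> carrier_mat n n" unfolding A_def by simp
  have mult_A: "(A *\<^sub>v w) $ r = (\<Sum>r'<n. w $ r' * H r' r)" if "r < n" "w \<in> carrier_vec n" for w r
    using that unfolding A_def
    by (auto simp: mult_mat_vec_def scalar_prod_def atLeast0LessThan intro!: sum.cong)
  have "det A \<noteq> 0"
  proof
    assume "det A = 0"
    then obtain v where v: "v \<in> carrier_vec n" "v \<noteq> 0\<^sub>v n" "A *\<^sub>v v = 0\<^sub>v n"
      using det_0_iff_vec_prod_zero[OF A] by blast
    have "\<forall>r<n. (\<Sum>r'<n. v $ r' * H r' r) = 0"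
      using v(1,3) mult_A by (metis index_zero_vec(1))
    then have "v = 0\<^sub>v n" using v(1) kernel[of "\<lambda>i. v $ i"] by (intro eq_vecI) auto
    with v(2) show False by simp
  qed
  then obtain B where B: "B \<in> carrier_mat n n" "A * B = 1\<^sub>m n"
    using det_non_zero_imp_unit[OF A, of undefined] unfolding Units_def ring_mat_def by auto
  define w where "w = B *\<^sub>v vec n e"
  have w: "w \<in> carrier_vec n" using B unfolding w_def by simp
  have "A *\<^sub>v w = vec n e"
    unfolding w_def using B A by (simp add: assoc_mult_mat_vec[symmetric])
  then show ?thesis using mult_A[OF _ w] by (metis index_vec)
qed

definition frob_sq :: "nat \<Rightarrow> (nat \<Rightarrow> nat) \<Rightarrow> nat \<Rightarrow> pt \<Rightarrow> real" where
  "frob_sq k m R U = (\<Sum>i<k. \<Sum>a<m i. \<Sum>r<R. (U i a r)\<^sup>2)"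

definition grad_eq :: "nat \<Rightarrow> (nat \<Rightarrow> nat) \<Rightarrow> nat \<Rightarrow> real \<Rightarrow> (pt \<Rightarrow> real) \<Rightarrow> pt \<Rightarrow> pt \<Rightarrow> bool" where
  "grad_eq k m R del F U \<xi> \<longleftrightarrow> (\<forall>i<k. \<forall>a<m i. \<forall>r<R.
     (\<Sum>r'<R. \<xi> i a r' * Hmat k m del U i r' r) = egrad F U i a r)"

lemma frob_sq_nonneg: "0 \<le> frob_sq k m R U"
  unfolding frob_sq_def by (intro sum_nonneg) auto

lemma entry_sq_le_frob_sq:
  assumes "i < k" "a < m i" "r < R"
  shows "(U i a r)\<^sup>2 \<le> frob_sq k m R U"
proof -
  have "(U i a r)\<^sup>2 \<le> (\<Sum>r<R. (U i a r)\<^sup>2)" using assms by (intro member_le_sum) auto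
  also have "\<dots> \<le> (\<Sum>a<m i. \<Sum>r<R. (U i a r)\<^sup>2)"
    using assms by (intro member_le_sum[where f = "\<lambda>a. \<Sum>r<R. (U i a r)\<^sup>2"]) (auto intro!: sum_nonneg)
  also have "\<dots> \<le> frob_sq k m R U" unfolding frob_sq_def
    using assms by (intro member_le_sum[where f = "\<lambda>i. \<Sum>a<m i. \<Sum>r<R. (U i a r)\<^sup>2"]) (auto intro!: sum_nonneg)
  finally show ?thesis .
qed

lemma abs_entry_le_sqrt_frob_sq:
  assumes "i < k" "a < m i" "r < R"
  shows "\<bar>U i a r\<bar> \<le> sqrt (frob_sq k m R U)"
  using entry_sq_le_frob_sq[where k=k and m=m and R=R and U=U, OF assms] by (simp add: real_le_rsqrt)

lemma frob_sq_le_of_abs_le: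
  assumes "\<forall>i<k. \<forall>a<m i. \<forall>r<R. \<bar>U i a r\<bar> \<le> b"
  shows "frob_sq k m R U \<le> (\<Sum>i<k. real (m i) * R) * b\<^sup>2"
proof -
  have "frob_sq k m R U \<le> (\<Sum>i<k. \<Sum>a<m i. \<Sum>r<R. b\<^sup>2)"
    unfolding frob_sq_def using assms
    by (intro sum_mono) (metis abs_le_square_iff lessThan_iff order_trans abs_ge_self abs_of_nonneg abs_ge_zero power2_abs)
  also have "\<dots> = (\<Sum>i<k. real (m i) * R) * b\<^sup>2" by (simp add: sum_distrib_right mult.assoc)
  finally show ?thesis .
qed

lemma frob_sq_pneg [simp]: "frob_sq k m R (pneg U) = frob_sq k m R U"
  unfolding frob_sq_def pneg_def by simp

lemma Hmat_quad_form:
  "(\<Sum>r<R. \<Sum>r'<R. v r * Hmat k m del U i r r' * v r') =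
   (\<Sum>j\<in>PiE ({..<k} - {i}) (\<lambda>l. {..<m l}). (\<Sum>r<R. v r * krao k U i j r)\<^sup>2) + del * (\<Sum>r<R. (v r)\<^sup>2)"
proof -
  let ?J = "PiE ({..<k} - {i}) (\<lambda>l. {..<m l})"
  have gram: "(\<Sum>r<R. \<Sum>r'<R. \<Sum>j\<in>?J. (v r * krao k U i j r) * (v r' * krao k U i j r'))
     = (\<Sum>j\<in>?J. (\<Sum>r<R. v r * krao k U i j r)\<^sup>2)"
    by (simp add: power2_eq_square sum_product sum.swap[of _ ?J])
  have diag: "(\<Sum>r<R. \<Sum>r'<R. v r * (if r = r' then del else 0) * v r') = del * (\<Sum>r<R. (v r)\<^sup>2)"
    by (simp add: sum_distrib_left power2_eq_square mult_ac if_distrib if_distribR cong: if_cong)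
  show ?thesis
    unfolding Hmat_def gram[symmetric] diag[symmetric]
    by (simp add: distrib_left distrib_right sum.distrib sum_distrib_left sum_distrib_right mult_ac)
qed

lemma Hmat_quad_form_ge:
  "del * (\<Sum>r<R. (v r)\<^sup>2) \<le> (\<Sum>r<R. \<Sum>r'<R. v r * Hmat k m del U i r r' * v r')"
  unfolding Hmat_quad_form by (simp add: sum_nonneg)

lemma Hmat_left_kernel_trivial:
  assumes del: "del > 0" and ker: "\<forall>r<R. (\<Sum>r'<R. v r' * Hmat k m del U i r' r) = 0"
  shows "\<forall>r<R. v r = 0"
proof -
  have "(\<Sum>r<R. \<Sum>r'<R. v r * Hmat k m del U i r r' * v r') =
        (\<Sum>r'<R. (\<Sum>r<R. v r * Hmat k m del U i r r') * v r')"
    by (subst sum.swap) (simp add: sum_distrib_right)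
  also have "\<dots> = 0" using ker by simp
  finally have "del * (\<Sum>r<R. (v r)\<^sup>2) \<le> 0"
    using Hmat_quad_form_ge[where del=del and R=R and v=v and k=k and m=m and U=U and i=i] by simp
  then have "(\<Sum>r<R. (v r)\<^sup>2) = 0"
    using del by (simp add: mult_le_0_iff order_antisym sum_nonneg)
  then show ?thesis by (simp add: sum_nonneg_eq_0_iff)
qed

lemma rmetric_ge_frob_sq:
  "del * frob_sq k m R \<xi> \<le> rmetric k m R del U \<xi> \<xi>"
proof -
  have "del * frob_sq k m R \<xi> = (\<Sum>i<k. \<Sum>a<m i. del * (\<Sum>r<R. (\<xi> i a r)\<^sup>2))"
    unfolding frob_sq_def by (simp add: sum_distrib_left)
  also have "\<dots> \<le> rmetric k m R del U \<xi> \<xi>"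
    unfolding rmetric_def by (intro sum_mono Hmat_quad_form_ge)
  finally show ?thesis .
qed

lemma rmetric_nonneg: "del > 0 \<Longrightarrow> 0 \<le> rmetric k m R del U \<xi> \<xi>"
  using rmetric_ge_frob_sq[of del k m R \<xi> U] frob_sq_nonneg[of k m R \<xi>]
  by (meson mult_nonneg_nonneg less_imp_le order_trans)

lemma rmetric_pneg_pneg [simp]: "rmetric k m R del U (pneg \<xi>) (pneg \<xi>) = rmetric k m R del U \<xi> \<xi>"
  unfolding rmetric_def pneg_def by simp

lemma grad_eq_unique:
  assumes del: "del > 0"
    and "\<xi> \<in> mpts k m R" "grad_eq k m R del F U \<xi>" "\<eta> \<in> mpts k m R" "grad_eq k m R del F U \<eta>"
  shows "\<xi> = \<eta>"
proof (intro ext)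
  fix i a r
  show "\<xi> i a r = \<eta> i a r"
  proof (cases "i < k \<and> a < m i \<and> r < R")
    case True
    have "\<forall>r<R. (\<Sum>r'<R. (\<xi> i a r' - \<eta> i a r') * Hmat k m del U i r' r) = 0"
      using assms(3,5) True unfolding grad_eq_def by (simp add: left_diff_distrib sum_subtractf)
    from Hmat_left_kernel_trivial[OF del this] True show ?thesis by simp
  next
    case False
    then show ?thesis using assms(2,4) unfolding mpts_def by auto
  qed
qed

lemma grad_eq_solvable:
  assumes del: "del > 0"
  shows "\<exists>\<xi>. \<xi> \<in> mpts k m R \<and> grad_eq k m R del F U \<xi>"
proof -
  have "\<exists>v. \<forall>r<R. (\<Sum>r'<R. v r' * Hmat k m del U i r' r) = egrad F U i a r" for i a
    by (rule square_system_solvable) (rule Hmat_left_kernel_trivial[OF del])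
  then obtain v where v: "\<And>i a. \<forall>r<R. (\<Sum>r'<R. v i a r' * Hmat k m del U i r' r) = egrad F U i a r"
    by metis
  define \<xi> where "\<xi> = (\<lambda>i a r. if i < k \<and> a < m i \<and> r < R then v i a r else 0)"
  have "(\<Sum>r'<R. \<xi> i a r' * Hmat k m del U i r' r) = egrad F U i a r"
    if "i < k" "a < m i" "r < R" for i a r
  proof -
    have "(\<Sum>r'<R. \<xi> i a r' * Hmat k m del U i r' r) = (\<Sum>r'<R. v i a r' * Hmat k m del U i r' r)"
      using that unfolding \<xi>_def by (intro sum.cong) auto
    then show ?thesis using v[of i a] that by simp
  qed
  then have "grad_eq k m R del F U \<xi>" unfolding grad_eq_def by blast
  moreover have "\<xi> \<in> mpts k m R" unfolding mpts_def \<xi>_def by auto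
  ultimately show ?thesis by blast
qed

lemma rgrad_grad_eq:
  assumes del: "del > 0"
  shows "rgrad k m R del F U \<in> mpts k m R" "grad_eq k m R del F U (rgrad k m R del F U)"
proof -
  have "\<exists>!\<xi>. \<xi> \<in> mpts k m R \<and> grad_eq k m R del F U \<xi>"
    using grad_eq_solvable[OF del] grad_eq_unique[OF del] by blast
  from theI'[OF this] show "rgrad k m R del F U \<in> mpts k m R" "grad_eq k m R del F U (rgrad k m R del F U)"
    unfolding rgrad_def grad_eq_def by simp_all
qed

lemma rgrad_eqI:
  "del > 0 \<Longrightarrow> \<xi> \<in> mpts k m R \<Longrightarrow> grad_eq k m R del F U \<xi> \<Longrightarrow> rgrad k m R del F U = \<xi>"
  using grad_eq_unique rgrad_grad_eq by metis

lemma grad_eq_rmetric: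
  assumes "grad_eq k m R del F U \<xi>"
  shows "(\<Sum>i<k. \<Sum>a<m i. \<Sum>r<R. egrad F U i a r * \<xi> i a r) = rmetric k m R del U \<xi> \<xi>"
proof -
  have row: "(\<Sum>r<R. egrad F U i a r * \<xi> i a r) = (\<Sum>r<R. \<Sum>r'<R. \<xi> i a r * Hmat k m del U i r r' * \<xi> i a r')"
    if "i < k" "a < m i" for i a
  proof -
    have "(\<Sum>r<R. egrad F U i a r * \<xi> i a r) = (\<Sum>r<R. (\<Sum>r'<R. \<xi> i a r' * Hmat k m del U i r' r) * \<xi> i a r)"
      using assms that unfolding grad_eq_def by (intro sum.cong) auto
    also have "\<dots> = (\<Sum>r'<R. \<Sum>r<R. \<xi> i a r' * Hmat k m del U i r' r * \<xi> i a r)"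
      unfolding sum_distrib_right by (rule sum.swap)
    finally show ?thesis .
  qed
  show ?thesis unfolding rmetric_def
    by (rule sum.cong[OF refl], rule sum.cong[OF refl], rule row) auto
qed

section \<open>Derivatives of the objective\<close>

definition sample_ratio :: "nat \<Rightarrow> (nat \<Rightarrow> nat) \<Rightarrow> (nat \<Rightarrow> nat) set \<Rightarrow> real" where
  "sample_ratio k m \<Omega> = real (card \<Omega>) / real (card (mindex k m))"

definition cpt_dderiv :: "nat \<Rightarrow> nat \<Rightarrow> pt \<Rightarrow> pt \<Rightarrow> (nat \<Rightarrow> nat) \<Rightarrow> real" where
  "cpt_dderiv k R U D j = (\<Sum>r<R. \<Sum>l<k. D l (j l) r * (\<Prod>l'\<in>{..<k} - {l}. U l' (j l') r))"

definition obj_dderiv :: "nat \<Rightarrow> (nat \<Rightarrow> nat) \<Rightarrow> nat \<Rightarrow> ((nat \<Rightarrow> nat) \<Rightarrow> real)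
    \<Rightarrow> (nat \<Rightarrow> nat) set \<Rightarrow> real \<Rightarrow> pt \<Rightarrow> pt \<Rightarrow> real" where
  "obj_dderiv k m R T \<Omega> lam U D =
     1 / sample_ratio k m \<Omega> * (\<Sum>j\<in>\<Omega>. (cpt k R U j - T j) * cpt_dderiv k R U D j)
     + lam * (\<Sum>i<k. \<Sum>a<m i. \<Sum>r<R. U i a r * D i a r)"

definition obj_egrad :: "nat \<Rightarrow> (nat \<Rightarrow> nat) \<Rightarrow> nat \<Rightarrow> ((nat \<Rightarrow> nat) \<Rightarrow> real)
    \<Rightarrow> (nat \<Rightarrow> nat) set \<Rightarrow> real \<Rightarrow> pt \<Rightarrow> nat \<Rightarrow> nat \<Rightarrow> nat \<Rightarrow> real" where
  "obj_egrad k m R T \<Omega> lam U i a r =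
     1 / sample_ratio k m \<Omega> * (\<Sum>j\<in>\<Omega>. (cpt k R U j - T j) *
        (if j i = a then (\<Prod>l\<in>{..<k} - {i}. U l (j l) r) else 0))
     + lam * U i a r"

lemma finite_mindex: "finite (mindex k m)"
  unfolding mindex_def by (intro finite_PiE) auto

lemma mindex_lt: "j \<in> mindex k m \<Longrightarrow> l < k \<Longrightarrow> j l < m l"
  unfolding mindex_def by (auto simp: PiE_def Pi_def)

lemma sample_ratio_pos: "\<Omega> \<subseteq> mindex k m \<Longrightarrow> \<Omega> \<noteq> {} \<Longrightarrow> 0 < sample_ratio k m \<Omega>"
  unfolding sample_ratio_def using finite_mindex
  by (metis card_gt_0_iff divide_pos_pos finite_subset of_nat_0_less_iff subset_empty)

lemma obj_eq:
  "obj k m R T \<Omega> lam U = 1 / (2 * sample_ratio k m \<Omega>) * (\<Sum>j\<in>\<Omega>. (cpt k R U j - T j)\<^sup>2)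
      + lam / 2 * frob_sq k m R U"
  unfolding obj_def sample_ratio_def frob_sq_def Let_def ..

lemma pmove_zero [simp]: "pmove U D 0 = U"
  unfolding pmove_def by simp

lemma has_real_derivative_prod_line:
  "((\<lambda>s. \<Prod>l<k. U l (j l) r + s * D l (j l) r) has_real_derivative
     (\<Sum>l<k. D l (j l) r * (\<Prod>l'\<in>{..<k} - {l}. U l' (j l') r))) (at 0)"
proof -
  have "((\<lambda>s. U l (j l) r + s * D l (j l) r) has_real_derivative D l (j l) r) (at 0)" for l
    by (auto intro!: derivative_eq_intros)
  from has_field_derivative_prod[of "{..<k}", OF this] show ?thesis by simp
qed

lemma cpt_line_derivative:
  "((\<lambda>s. cpt k R (pmove U D s) j) has_real_derivative cpt_dderiv k R U D j) (at 0)"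
  unfolding cpt_def pmove_def cpt_dderiv_def by (intro DERIV_sum has_real_derivative_prod_line)

lemma obj_line_derivative:
  "((\<lambda>s. obj k m R T \<Omega> lam (pmove U D s)) has_real_derivative obj_dderiv k m R T \<Omega> lam U D) (at 0)"
proof -
  have residual: "((\<lambda>s. \<Sum>j\<in>\<Omega>. (cpt k R (pmove U D s) j - T j)\<^sup>2) has_real_derivative
      (\<Sum>j\<in>\<Omega>. 2 * ((cpt k R U j - T j) * cpt_dderiv k R U D j))) (at 0)"
    by (rule DERIV_sum, rule DERIV_cong, rule DERIV_power,
        rule DERIV_diff[OF cpt_line_derivative DERIV_const]) (simp add: mult_ac)
  have penalty: "((\<lambda>s. frob_sq k m R (pmove U D s)) has_real_derivative
      (\<Sum>i<k. \<Sum>a<m i. \<Sum>r<R. 2 * (U i a r * D i a r))) (at 0)"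
    unfolding pmove_def frob_sq_def
    by (rule DERIV_sum, rule DERIV_sum, rule DERIV_sum, rule DERIV_cong, rule DERIV_power,
        auto intro!: derivative_eq_intros)
  have "((\<lambda>s. obj k m R T \<Omega> lam (pmove U D s)) has_real_derivative
     1 / (2 * sample_ratio k m \<Omega>) * (\<Sum>j\<in>\<Omega>. 2 * ((cpt k R U j - T j) * cpt_dderiv k R U D j))
     + lam / 2 * (\<Sum>i<k. \<Sum>a<m i. \<Sum>r<R. 2 * (U i a r * D i a r))) (at 0)"
    unfolding obj_eq by (intro DERIV_add DERIV_cmult residual penalty)
  then show ?thesis
    by (rule DERIV_cong) (simp add: obj_dderiv_def sum_distrib_left[symmetric])
qed

definition unit_pt :: "nat \<Rightarrow> nat \<Rightarrow> nat \<Rightarrow> pt" where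
  "unit_pt i a r = (\<lambda>i' a' r'. if i' = i \<and> a' = a \<and> r' = r then 1 else 0)"

lemma egrad_obj_dderiv: "egrad (obj k m R T \<Omega> lam) U i a r = obj_dderiv k m R T \<Omega> lam U (unit_pt i a r)"
proof -
  have "(\<lambda>s. obj k m R T \<Omega> lam (\<lambda>i' a' r'. U i' a' r' + (if i' = i \<and> a' = a \<and> r' = r then s else 0)))
      = (\<lambda>s. obj k m R T \<Omega> lam (pmove U (unit_pt i a r) s))"
    unfolding pmove_def unit_pt_def by (intro ext arg_cong[where f = "obj k m R T \<Omega> lam"]) auto
  then show ?thesis unfolding egrad_def by (simp add: DERIV_imp_deriv[OF obj_line_derivative])
qed

lemma cpt_dderiv_unit_pt:
  assumes "i < k" "r < R"
  shows "cpt_dderiv k R U (unit_pt i a r) j = (if j i = a then (\<Prod>l\<in>{..<k} - {i}. U l (j l) r) else 0)"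
proof -
  have "(\<Sum>l<k. unit_pt i a r l (j l) r' * (\<Prod>l'\<in>{..<k} - {l}. U l' (j l') r')) =
        (\<Sum>l<k. if l = i then (if r' = r \<and> j i = a then (\<Prod>l'\<in>{..<k} - {i}. U l' (j l') r) else 0) else 0)"
    for r'
    by (intro sum.cong) (auto simp: unit_pt_def)
  then show ?thesis unfolding cpt_dderiv_def using assms by simp
qed

lemma frob_inner_unit_pt:
  assumes "i < k" "a < m i" "r < R"
  shows "(\<Sum>i'<k. \<Sum>a'<m i'. \<Sum>r'<R. U i' a' r' * unit_pt i a r i' a' r') = U i a r"
proof -
  have "(\<Sum>i'<k. \<Sum>a'<m i'. \<Sum>r'<R. U i' a' r' * unit_pt i a r i' a' r')
      = (\<Sum>i'<k. \<Sum>a'<m i'. \<Sum>r'<R. if i' = i \<and> a' = a \<and> r' = r then U i a r else 0)"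
    unfolding unit_pt_def by (intro sum.cong refl) auto
  also have "\<dots> = (\<Sum>i'<k. \<Sum>a'<m i'. if i' = i \<and> a' = a then U i a r else 0)"
    using assms(3) by (intro sum.cong refl) auto
  also have "\<dots> = (\<Sum>i'<k. if i' = i then U i a r else 0)"
    using assms(2) by (intro sum.cong refl) auto
  also have "\<dots> = U i a r" using assms(1) by simp
  finally show ?thesis .
qed

lemma egrad_obj:
  assumes "i < k" "a < m i" "r < R"
  shows "egrad (obj k m R T \<Omega> lam) U i a r = obj_egrad k m R T \<Omega> lam U i a r"
  unfolding egrad_obj_dderiv obj_dderiv_def obj_egrad_def
  using assms by (simp add: cpt_dderiv_unit_pt frob_inner_unit_pt)

lemma obj_egrad_inner:
  assumes \<Omega>: "\<Omega> \<subseteq> mindex k m" "finite \<Omega>"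
  shows "(\<Sum>i<k. \<Sum>a<m i. \<Sum>r<R. obj_egrad k m R T \<Omega> lam U i a r * D i a r) = obj_dderiv k m R T \<Omega> lam U D"
proof -
  define cT where "cT j = cpt k R U j - T j" for j
  define P where "P i j r = (\<Prod>l\<in>{..<k}-{i}. U l (j l) r)" for i j r
  have sum_over_rows: "(\<Sum>a<m i. (\<Sum>j\<in>\<Omega>. cT j * (if j i = a then P i j r else 0)) * D i a r)
      = (\<Sum>j\<in>\<Omega>. cT j * (D i (j i) r * P i j r))" if "i < k" for i r
  proof -
    have "(\<Sum>a<m i. (\<Sum>j\<in>\<Omega>. cT j * (if j i = a then P i j r else 0)) * D i a r)
       = (\<Sum>a<m i. \<Sum>j\<in>\<Omega>. (if j i = a then cT j * (D i a r * P i j r) else 0))"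
      by (simp add: sum_distrib_right sum_distrib_left if_distrib if_distribR mult_ac cong: if_cong)
    also have "\<dots> = (\<Sum>j\<in>\<Omega>. \<Sum>a<m i. (if a = j i then cT j * (D i a r * P i j r) else 0))"
      by (subst sum.swap) (intro sum.cong refl, auto)
    also have "\<dots> = (\<Sum>j\<in>\<Omega>. cT j * (D i (j i) r * P i j r))"
      using \<Omega> mindex_lt that by (intro sum.cong refl) (auto simp: sum.delta)
    finally show ?thesis .
  qed
  have residual_part: "(\<Sum>i<k. \<Sum>a<m i. \<Sum>r<R. (\<Sum>j\<in>\<Omega>. cT j * (if j i = a then P i j r else 0)) * D i a r)
     = (\<Sum>j\<in>\<Omega>. cT j * cpt_dderiv k R U D j)"
  proof -
    have "(\<Sum>i<k. \<Sum>a<m i. \<Sum>r<R. (\<Sum>j\<in>\<Omega>. cT j * (if j i = a then P i j r else 0)) * D i a r)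
       = (\<Sum>i<k. \<Sum>r<R. \<Sum>a<m i. (\<Sum>j\<in>\<Omega>. cT j * (if j i = a then P i j r else 0)) * D i a r)"
      by (rule sum.cong[OF refl], rule sum.swap)
    also have "\<dots> = (\<Sum>i<k. \<Sum>r<R. \<Sum>j\<in>\<Omega>. cT j * (D i (j i) r * P i j r))"
      using sum_over_rows by simp
    also have "\<dots> = (\<Sum>j\<in>\<Omega>. \<Sum>r<R. \<Sum>i<k. cT j * (D i (j i) r * P i j r))"
      by (subst sum.swap, subst (2) sum.swap) (intro sum.cong refl, rule sum.swap)
    also have "\<dots> = (\<Sum>j\<in>\<Omega>. cT j * cpt_dderiv k R U D j)"
      unfolding cpt_dderiv_def P_def by (simp add: sum_distrib_left)
    finally show ?thesis .
  qed
  have "(\<Sum>i<k. \<Sum>a<m i. \<Sum>r<R. obj_egrad k m R T \<Omega> lam U i a r * D i a r) =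
     1 / sample_ratio k m \<Omega> * (\<Sum>i<k. \<Sum>a<m i. \<Sum>r<R. (\<Sum>j\<in>\<Omega>. cT j * (if j i = a then P i j r else 0)) * D i a r)
     + lam * (\<Sum>i<k. \<Sum>a<m i. \<Sum>r<R. U i a r * D i a r)"
  proof -
    have pw: "obj_egrad k m R T \<Omega> lam U i a r * D i a r =
       1 / sample_ratio k m \<Omega> * ((\<Sum>j\<in>\<Omega>. cT j * (if j i = a then P i j r else 0)) * D i a r)
       + lam * (U i a r * D i a r)" for i a r
      unfolding obj_egrad_def cT_def P_def by (simp add: algebra_simps)
    show ?thesis by (simp only: pw sum.distrib sum_distrib_left[symmetric])
  qed
  also have "\<dots> = obj_dderiv k m R T \<Omega> lam U D" using residual_part unfolding obj_dderiv_def cT_def by simp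
  finally show ?thesis .
qed

section \<open>Second-order bound along a line\<close>

lemma abs_prod_le_power:
  fixes u :: "'a \<Rightarrow> real"
  assumes "\<forall>l\<in>L. \<bar>u l\<bar> \<le> B"
  shows "\<bar>\<Prod>l\<in>L. u l\<bar> \<le> B ^ card L"
proof (cases "finite L")
  case True
  have "\<bar>\<Prod>l\<in>L. u l\<bar> = (\<Prod>l\<in>L. \<bar>u l\<bar>)" by (simp add: abs_prod)
  also have "\<dots> \<le> (\<Prod>l\<in>L. B)" using assms by (intro prod_mono) auto
  finally show ?thesis by simp
next
  case False
  then show ?thesis using assms by (cases "L = {}") force+
qed

lemma abs_sum_prod_others_le:
  fixes u d :: "'a \<Rightarrow> real"
  assumes L: "finite L" and u: "\<forall>l\<in>L. \<bar>u l\<bar> \<le> B" and d: "\<forall>l\<in>L. \<bar>d l\<bar> \<le> \<delta>" and B: "1 \<le> B"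
  shows "\<bar>\<Sum>l\<in>L. d l * (\<Prod>l'\<in>L - {l}. u l')\<bar> \<le> real (card L) * B ^ card L * \<delta>"
proof -
  have "\<bar>d l * (\<Prod>l'\<in>L - {l}. u l')\<bar> \<le> \<delta> * B ^ card L" if l: "l \<in> L" for l
  proof -
    have "\<bar>\<Prod>l'\<in>L - {l}. u l'\<bar> \<le> B ^ card (L - {l})" using u by (intro abs_prod_le_power) auto
    also have "\<dots> \<le> B ^ card L" using B L by (intro power_increasing) (auto intro: card_mono)
    finally show ?thesis using d l unfolding abs_mult by (intro mult_mono) auto
  qed
  then have "\<bar>\<Sum>l\<in>L. d l * (\<Prod>l'\<in>L - {l}. u l')\<bar> \<le> (\<Sum>l\<in>L. \<delta> * B ^ card L)"
    by (rule order_trans[OF sum_abs sum_mono])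
  then show ?thesis by (simp add: mult_ac)
qed

lemma sum_prod_others_insert:
  fixes u d :: "'a \<Rightarrow> 'b::comm_ring_1"
  assumes "finite L" "a \<notin> L"
  shows "(\<Sum>l\<in>insert a L. d l * (\<Prod>l'\<in>insert a L - {l}. u l'))
       = d a * (\<Prod>l\<in>L. u l) + u a * (\<Sum>l\<in>L. d l * (\<Prod>l'\<in>L - {l}. u l'))"
proof -
  have "(\<Prod>l'\<in>insert a L - {l}. u l') = u a * (\<Prod>l'\<in>L - {l}. u l')" if "l \<in> L" for l
  proof -
    have "insert a L - {l} = insert a (L - {l})" using that assms by auto
    then show ?thesis using assms by simp
  qed
  then show ?thesis
    using assms by (simp add: Diff_insert_absorb sum_distrib_left mult_ac cong: sum.cong)
qed

lemma real_mult_power_le_four_power: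
  assumes "1 \<le> (B::real)"
  shows "real n * B ^ n \<le> 2 * B * (4 * B) ^ n"
proof -
  have "real n \<le> 2 ^ n" using less_exp[of n] by (simp add: less_imp_le)
  also have "(2::real) ^ n \<le> 4 ^ n" by (intro power_mono) auto
  finally have "real n \<le> 4 ^ n" .
  then have "real n * B ^ n \<le> 4 ^ n * B ^ n" using assms by (intro mult_right_mono) auto
  also have "\<dots> \<le> 2 * B * (4 * B) ^ n" using assms by (simp add: power_mult_distrib)
  finally show ?thesis .
qed

lemma prod_linearization_error:
  fixes u d :: "'a \<Rightarrow> real"
  assumes L: "finite L" and u: "\<forall>l\<in>L. \<bar>u l\<bar> \<le> B" and d: "\<forall>l\<in>L. \<bar>d l\<bar> \<le> \<delta>"
    and s: "0 \<le> s" "s \<le> 1" and \<delta>: "0 \<le> \<delta>" "\<delta> \<le> B" and B: "1 \<le> B"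
  shows "\<bar>(\<Prod>l\<in>L. u l + s * d l) - (\<Prod>l\<in>L. u l) - s * (\<Sum>l\<in>L. d l * (\<Prod>l'\<in>L - {l}. u l'))\<bar>
          \<le> s\<^sup>2 * \<delta>\<^sup>2 * (4 * B) ^ card L"
  using L u d
proof (induction L rule: finite_induct)
  case empty
  then show ?case by simp
next
  case (insert a L)
  define Q where "Q = (\<Sum>l\<in>L. d l * (\<Prod>l'\<in>L - {l}. u l'))"
  define E where "E = (\<Prod>l\<in>L. u l + s * d l) - (\<Prod>l\<in>L. u l) - s * Q"
  define X where "X = s\<^sup>2 * \<delta>\<^sup>2 * (4 * B) ^ card L"
  have IH: "\<bar>E\<bar> \<le> X" using insert unfolding E_def Q_def X_def by auto
  have "\<bar>Q\<bar> \<le> real (card L) * B ^ card L * \<delta>"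
    unfolding Q_def using insert B by (intro abs_sum_prod_others_le) auto
  then have "\<bar>d a\<bar> * \<bar>Q\<bar> \<le> \<delta> * (real (card L) * B ^ card L * \<delta>)"
    using insert.prems \<delta> by (intro mult_mono) auto
  then have "\<bar>s\<^sup>2 * d a * Q\<bar> \<le> s\<^sup>2 * (\<delta> * (real (card L) * B ^ card L * \<delta>))"
    by (simp add: abs_mult mult.assoc mult_left_mono)
  also have "\<dots> = s\<^sup>2 * \<delta>\<^sup>2 * (real (card L) * B ^ card L)"
    by (simp add: power2_eq_square mult_ac)
  also have "\<dots> \<le> 2 * B * X"
    unfolding X_def using mult_left_mono[OF real_mult_power_le_four_power[OF B, of "card L"], of "s\<^sup>2 * \<delta>\<^sup>2"]
    by (simp add: mult_ac)
  finally have Q_term: "\<bar>s\<^sup>2 * d a * Q\<bar> \<le> 2 * B * X" .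
  have "s * \<bar>d a\<bar> \<le> 1 * \<delta>"
    using insert.prems s by (intro mult_mono) auto
  then have "\<bar>u a + s * d a\<bar> \<le> B + \<delta>"
    using insert.prems s by (intro abs_triangle_ineq[THEN order_trans] add_mono) (auto simp: abs_mult)
  then have "\<bar>(u a + s * d a) * E\<bar> \<le> 2 * B * X"
    using IH \<delta> unfolding abs_mult by (intro mult_mono) auto
  moreover have "(\<Prod>l\<in>insert a L. u l + s * d l) - (\<Prod>l\<in>insert a L. u l)
      - s * (\<Sum>l\<in>insert a L. d l * (\<Prod>l'\<in>insert a L - {l}. u l'))
      = (u a + s * d a) * E + s\<^sup>2 * d a * Q"
    using insert.hyps unfolding sum_prod_others_insert[OF insert.hyps] E_def Q_def
    by (simp add: algebra_simps power2_eq_square)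
  ultimately show ?case
    using Q_term insert.hyps abs_triangle_ineq[of "(u a + s * d a) * E" "s\<^sup>2 * d a * Q"]
    unfolding X_def by (simp add: mult_ac)
qed

lemma abs_cpt_dderiv_le:
  assumes j: "j \<in> mindex k m"
    and U: "\<forall>i<k. \<forall>a<m i. \<forall>r<R. \<bar>U i a r\<bar> \<le> B"
    and D: "\<forall>i<k. \<forall>a<m i. \<forall>r<R. \<bar>D i a r\<bar> \<le> \<delta>" and B: "1 \<le> B"
  shows "\<bar>cpt_dderiv k R U D j\<bar> \<le> R * k * B ^ k * \<delta>"
proof -
  have row: "\<bar>\<Sum>l<k. D l (j l) r * (\<Prod>l'\<in>{..<k} - {l}. U l' (j l') r)\<bar> \<le> k * B ^ k * \<delta>" if "r < R" for r
    using abs_sum_prod_others_le[OF finite_lessThan _ _ B] U D that mindex_lt[OF j] by simp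
  have "\<bar>cpt_dderiv k R U D j\<bar> \<le> (\<Sum>r<R. k * B ^ k * \<delta>)"
    unfolding cpt_dderiv_def by (rule order_trans[OF sum_abs sum_mono]) (simp add: row)
  then show ?thesis by (simp add: mult_ac)
qed

lemma cpt_line_remainder_le:
  assumes j: "j \<in> mindex k m"
    and U: "\<forall>i<k. \<forall>a<m i. \<forall>r<R. \<bar>U i a r\<bar> \<le> B"
    and D: "\<forall>i<k. \<forall>a<m i. \<forall>r<R. \<bar>D i a r\<bar> \<le> \<delta>"
    and s: "0 \<le> s" "s \<le> 1" and \<delta>: "0 \<le> \<delta>" "\<delta> \<le> B" and B: "1 \<le> B"
  shows "\<bar>cpt k R (pmove U D s) j - cpt k R U j - s * cpt_dderiv k R U D j\<bar> \<le> R * (4 * B) ^ k * (s * \<delta>)\<^sup>2"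
proof -
  have row: "\<bar>(\<Prod>l<k. U l (j l) r + s * D l (j l) r) - (\<Prod>l<k. U l (j l) r)
      - s * (\<Sum>l<k. D l (j l) r * (\<Prod>l'\<in>{..<k} - {l}. U l' (j l') r))\<bar> \<le> s\<^sup>2 * \<delta>\<^sup>2 * (4 * B) ^ k"
    if "r < R" for r
    using prod_linearization_error[OF finite_lessThan _ _ s \<delta> B] U D that mindex_lt[OF j] by simp
  have "\<bar>\<Sum>r<R. (\<Prod>l<k. U l (j l) r + s * D l (j l) r) - (\<Prod>l<k. U l (j l) r)
      - s * (\<Sum>l<k. D l (j l) r * (\<Prod>l'\<in>{..<k} - {l}. U l' (j l') r))\<bar> \<le> (\<Sum>r<R. s\<^sup>2 * \<delta>\<^sup>2 * (4 * B) ^ k)"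
    by (rule order_trans[OF sum_abs sum_mono]) (rule row, simp)
  then show ?thesis
    unfolding cpt_def pmove_def cpt_dderiv_def
    by (simp add: sum_subtractf sum_distrib_left power_mult_distrib mult_ac)
qed

lemma square_expansion_bound:
  fixes c w e h :: real
  assumes w: "\<bar>w\<bar> \<le> C * h" and e: "\<bar>e\<bar> \<le> A * h\<^sup>2" and c: "\<bar>c\<bar> \<le> B2" and h: "0 \<le> h" "h \<le> B"
  shows "(c + w + e)\<^sup>2 \<le> c\<^sup>2 + 2 * c * w + (2 * C\<^sup>2 + 2 * A\<^sup>2 * B\<^sup>2 + 2 * B2 * A) * h\<^sup>2"
proof -
  have "(w + e)\<^sup>2 \<le> 2 * w\<^sup>2 + 2 * e\<^sup>2"
    using zero_le_power2[of "w - e"] by (simp add: power2_eq_square algebra_simps)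
  moreover have "w\<^sup>2 \<le> C\<^sup>2 * h\<^sup>2"
    using power_mono[OF w abs_ge_zero, of 2] by (simp add: power_mult_distrib)
  moreover have "e\<^sup>2 \<le> A\<^sup>2 * B\<^sup>2 * h\<^sup>2"
  proof -
    have "e\<^sup>2 \<le> A\<^sup>2 * (h\<^sup>2 * h\<^sup>2)"
      using power_mono[OF e abs_ge_zero, of 2] by (simp add: power_mult_distrib power2_eq_square mult_ac)
    also have "\<dots> \<le> A\<^sup>2 * (B\<^sup>2 * h\<^sup>2)"
      using h by (intro mult_left_mono mult_right_mono power_mono) auto
    finally show ?thesis by (simp add: mult_ac)
  qed
  moreover have "c * e \<le> B2 * (A * h\<^sup>2)"
  proof -
    have "c * e \<le> \<bar>c\<bar> * \<bar>e\<bar>" by (simp add: abs_mult[symmetric])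
    also have "\<dots> \<le> B2 * (A * h\<^sup>2)" using c e by (intro mult_mono) auto
    finally show ?thesis .
  qed
  moreover have "(c + w + e)\<^sup>2 = c\<^sup>2 + 2 * c * w + (w + e)\<^sup>2 + 2 * (c * e)"
    by (simp add: power2_eq_square algebra_simps)
  moreover have "(2 * C\<^sup>2 + 2 * A\<^sup>2 * B\<^sup>2 + 2 * B2 * A) * h\<^sup>2
      = 2 * (C\<^sup>2 * h\<^sup>2) + 2 * (A\<^sup>2 * B\<^sup>2 * h\<^sup>2) + 2 * (B2 * (A * h\<^sup>2))"
    by (simp add: algebra_simps)
  ultimately show ?thesis by linarith
qed

definition residual_const :: "nat \<Rightarrow> nat \<Rightarrow> real \<Rightarrow> real \<Rightarrow> real" where
  "residual_const k R B B2 = 2 * (R * k * B ^ k)\<^sup>2 + 2 * (R * (4 * B) ^ k)\<^sup>2 * B\<^sup>2 + 2 * B2 * (R * (4 * B) ^ k)"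

lemma residual_sq_line_bound:
  assumes j: "j \<in> mindex k m"
    and U: "\<forall>i<k. \<forall>a<m i. \<forall>r<R. \<bar>U i a r\<bar> \<le> B"
    and D: "\<forall>i<k. \<forall>a<m i. \<forall>r<R. \<bar>D i a r\<bar> \<le> \<delta>"
    and s: "0 \<le> s" "s \<le> 1" and \<delta>: "0 \<le> \<delta>" "\<delta> \<le> B" and B: "1 \<le> B"
    and c: "\<bar>cpt k R U j - t\<bar> \<le> B2"
  shows "(cpt k R (pmove U D s) j - t)\<^sup>2 \<le> (cpt k R U j - t)\<^sup>2 + 2 * s * ((cpt k R U j - t) * cpt_dderiv k R U D j)
           + residual_const k R B B2 * (s\<^sup>2 * \<delta>\<^sup>2)"
proof -
  define c0 where "c0 = cpt k R U j - t"
  define w where "w = s * cpt_dderiv k R U D j"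
  define e where "e = cpt k R (pmove U D s) j - cpt k R U j - w"
  have "\<bar>w\<bar> \<le> (R * k * B ^ k) * (s * \<delta>)"
    using mult_left_mono[OF abs_cpt_dderiv_le[OF j U D B] s(1)] s(1) unfolding w_def
    by (simp add: abs_mult mult_ac)
  moreover have "\<bar>e\<bar> \<le> (R * (4 * B) ^ k) * (s * \<delta>)\<^sup>2"
    using cpt_line_remainder_le[OF assms(1-8)] unfolding e_def w_def by simp
  moreover have "0 \<le> s * \<delta>" "s * \<delta> \<le> B"
    using s \<delta> by (simp_all add: mult_left_le_one_le order_trans[of _ \<delta> B])
  ultimately have "(c0 + w + e)\<^sup>2 \<le> c0\<^sup>2 + 2 * c0 * w + residual_const k R B B2 * (s * \<delta>)\<^sup>2"
    using square_expansion_bound[of w _ "s * \<delta>" e _ c0 B2 B] c unfolding residual_const_def c0_def by simp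
  moreover have "c0 + w + e = cpt k R (pmove U D s) j - t" unfolding c0_def e_def by simp
  moreover have "2 * c0 * w = 2 * s * ((cpt k R U j - t) * cpt_dderiv k R U D j)"
    unfolding c0_def w_def by (simp only: mult_ac)
  moreover have "(s * \<delta>)\<^sup>2 = s\<^sup>2 * \<delta>\<^sup>2" by (rule power_mult_distrib)
  ultimately show ?thesis unfolding c0_def by (simp only:)
qed

definition obj_curv_const :: "nat \<Rightarrow> (nat \<Rightarrow> nat) \<Rightarrow> nat \<Rightarrow> (nat \<Rightarrow> nat) set \<Rightarrow> real \<Rightarrow> real \<Rightarrow> real \<Rightarrow> real" where
  "obj_curv_const k m R \<Omega> lam B B2 = real (card \<Omega>) * residual_const k R B B2 / (2 * sample_ratio k m \<Omega>) + lam / 2"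

lemma obj_line_upper_bound:
  assumes \<Omega>: "\<Omega> \<subseteq> mindex k m" "\<Omega> \<noteq> {}" and lam: "0 \<le> lam"
    and U: "\<forall>i<k. \<forall>a<m i. \<forall>r<R. \<bar>U i a r\<bar> \<le> B"
    and D: "\<forall>i<k. \<forall>a<m i. \<forall>r<R. \<bar>D i a r\<bar> \<le> \<delta>" and SD: "frob_sq k m R D \<le> \<delta>\<^sup>2"
    and s: "0 \<le> s" "s \<le> 1" and dl: "0 \<le> \<delta>" "\<delta> \<le> B" and B: "1 \<le> B"
    and c0: "\<forall>j\<in>\<Omega>. \<bar>cpt k R U j - T j\<bar> \<le> B2"
  shows "obj k m R T \<Omega> lam (pmove U D s) \<le> obj k m R T \<Omega> lam U + s * obj_dderiv k m R T \<Omega> lam U D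
           + s\<^sup>2 * \<delta>\<^sup>2 * obj_curv_const k m R \<Omega> lam B B2"
proof -
  define Y where "Y = s\<^sup>2 * \<delta>\<^sup>2"
  define p where "p = sample_ratio k m \<Omega>"
  define ip where "ip = (\<Sum>i<k. \<Sum>a<m i. \<Sum>r<R. U i a r * D i a r)"
  define res where "res = (\<Sum>j\<in>\<Omega>. (cpt k R U j - T j) * cpt_dderiv k R U D j)"
  have p: "0 < p" unfolding p_def by (rule sample_ratio_pos[OF \<Omega>])
  have "(cpt k R (pmove U D s) j - T j)\<^sup>2 \<le> (cpt k R U j - T j)\<^sup>2
      + 2 * s * ((cpt k R U j - T j) * cpt_dderiv k R U D j) + residual_const k R B B2 * Y" if "j \<in> \<Omega>" for j
    unfolding Y_def using residual_sq_line_bound[OF _ U D s dl B, of j "T j" B2] that \<Omega>(1) c0 by auto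
  then have "(\<Sum>j\<in>\<Omega>. (cpt k R (pmove U D s) j - T j)\<^sup>2) \<le> (\<Sum>j\<in>\<Omega>. (cpt k R U j - T j)\<^sup>2
      + 2 * s * ((cpt k R U j - T j) * cpt_dderiv k R U D j) + residual_const k R B B2 * Y)"
    by (rule sum_mono)
  also have "\<dots> = (\<Sum>j\<in>\<Omega>. (cpt k R U j - T j)\<^sup>2) + 2 * s * res + real (card \<Omega>) * residual_const k R B B2 * Y"
    unfolding res_def by (simp add: sum.distrib sum_distrib_left)
  finally have residuals: "(\<Sum>j\<in>\<Omega>. (cpt k R (pmove U D s) j - T j)\<^sup>2) \<le>
      (\<Sum>j\<in>\<Omega>. (cpt k R U j - T j)\<^sup>2) + 2 * s * res + real (card \<Omega>) * residual_const k R B B2 * Y" .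
  have "(pmove U D s i a r)\<^sup>2 = (U i a r)\<^sup>2 + 2 * s * (U i a r * D i a r) + s\<^sup>2 * (D i a r)\<^sup>2" for i a r
    unfolding pmove_def by (simp add: power2_eq_square algebra_simps)
  then have "frob_sq k m R (pmove U D s) = frob_sq k m R U + 2 * s * ip + s\<^sup>2 * frob_sq k m R D"
    unfolding frob_sq_def ip_def by (simp only: sum.distrib sum_distrib_left[symmetric])
  moreover have "s\<^sup>2 * frob_sq k m R D \<le> Y" unfolding Y_def using SD by (intro mult_left_mono) auto
  ultimately have penalty: "frob_sq k m R (pmove U D s) \<le> frob_sq k m R U + 2 * s * ip + Y" by simp
  have "obj k m R T \<Omega> lam (pmove U D s) \<le>
      1 / (2 * p) * ((\<Sum>j\<in>\<Omega>. (cpt k R U j - T j)\<^sup>2) + 2 * s * res + real (card \<Omega>) * residual_const k R B B2 * Y)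
      + lam / 2 * (frob_sq k m R U + 2 * s * ip + Y)"
    unfolding obj_eq p_def[symmetric] using residuals penalty p lam by (intro add_mono mult_left_mono) auto
  also have "\<dots> = obj k m R T \<Omega> lam U + s * obj_dderiv k m R T \<Omega> lam U D + Y * obj_curv_const k m R \<Omega> lam B B2"
    unfolding obj_eq obj_dderiv_def obj_curv_const_def p_def[symmetric] ip_def[symmetric] res_def[symmetric]
    using p by (simp add: field_simps)
  finally show ?thesis unfolding Y_def by (simp add: mult_ac)
qed

lemma tendsto_cpt:
  assumes X: "\<forall>i<k. \<forall>a<m i. \<forall>r<R. (\<lambda>n. X n i a r) \<longlonglongrightarrow> Y i a r" and j: "j \<in> mindex k m"
  shows "(\<lambda>n. cpt k R (X n) j) \<longlonglongrightarrow> cpt k R Y j"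
  unfolding cpt_def using X mindex_lt[OF j] by (intro tendsto_sum tendsto_prod) auto

lemma tendsto_obj_egrad:
  assumes X: "\<forall>i<k. \<forall>a<m i. \<forall>r<R. (\<lambda>n. X n i a r) \<longlonglongrightarrow> Y i a r" and \<Omega>: "\<Omega> \<subseteq> mindex k m"
    and i: "i < k" "a < m i" "r < R"
  shows "(\<lambda>n. obj_egrad k m R T \<Omega> lam (X n) i a r) \<longlonglongrightarrow> obj_egrad k m R T \<Omega> lam Y i a r"
proof -
  have c: "(\<lambda>n. cpt k R (X n) j) \<longlonglongrightarrow> cpt k R Y j" if "j \<in> \<Omega>" for j
    using tendsto_cpt[OF X] that \<Omega> by auto
  have p: "(\<lambda>n. \<Prod>l\<in>{..<k}-{i}. X n l (j l) r) \<longlonglongrightarrow> (\<Prod>l\<in>{..<k}-{i}. Y l (j l) r)" if "j \<in> \<Omega>" for j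
    using X mindex_lt[of j k m] that \<Omega> i by (intro tendsto_prod) auto
  have q: "(\<lambda>n. (cpt k R (X n) j - T j) * (if j i = a then \<Prod>l\<in>{..<k}-{i}. X n l (j l) r else 0))
     \<longlonglongrightarrow> (cpt k R Y j - T j) * (if j i = a then \<Prod>l\<in>{..<k}-{i}. Y l (j l) r else 0)" if "j \<in> \<Omega>" for j
    using c[OF that] p[OF that] by (cases "j i = a") (auto intro!: tendsto_mult tendsto_diff)
  show ?thesis unfolding obj_egrad_def using X i
    by (intro tendsto_add tendsto_mult tendsto_const tendsto_sum q) auto
qed

lemma tendsto_Hmat:
  assumes X: "\<forall>i<k. \<forall>a<m i. \<forall>r<R. (\<lambda>n. X n i a r) \<longlonglongrightarrow> Y i a r"
    and i: "i < k" "r < R" "r' < R"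
  shows "(\<lambda>n. Hmat k m del (X n) i r r') \<longlonglongrightarrow> Hmat k m del Y i r r'"
  unfolding Hmat_def krao_def using X i
  by (intro tendsto_add tendsto_mult tendsto_const tendsto_sum tendsto_prod) (auto simp: PiE_def Pi_def)

lemma pmove_pneg_mpts: "U \<in> mpts k m R \<Longrightarrow> D \<in> mpts k m R \<Longrightarrow> pmove U (pneg D) s \<in> mpts k m R"
  unfolding mpts_def pmove_def pneg_def by auto

lemma rgd_iter_mpts:
  assumes "del > 0" "rgd_iter k m R del F x s"
  shows "x t \<in> mpts k m R"
proof (induction t)
  case 0
  then show ?case using assms(2) unfolding rgd_iter_def by simp
next
  case (Suc t)
  then show ?case
    using assms(2) rgd_iter_def pmove_pneg_mpts rgrad_grad_eq(1)[OF assms(1)] by metis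
qed

lemma armijo_rule_decrease:
  assumes del: "del > 0" and iter: "rgd_iter k m R del F x s"
    and armijo: "armijo_rule k m R del F \<sigma> \<beta> smin x s" and "0 < \<sigma>" "0 < smin"
  shows "\<sigma> * smin * rmetric k m R del (x t) (rgrad k m R del F (x t)) (rgrad k m R del F (x t))
           \<le> F (x t) - F (x (Suc t))"
proof -
  let ?g = "rgrad k m R del F (x t)"
  let ?P = "\<lambda>l::nat. armijo_cond k m R del F \<sigma> (x t) (max (armijo_trial k m R del F x t * \<beta> ^ l) smin)"
  have ex: "\<exists>l. ?P l" and st: "s t = max (armijo_trial k m R del F x t * \<beta> ^ (LEAST l. ?P l)) smin"
    using armijo unfolding armijo_rule_def by auto
  have "armijo_cond k m R del F \<sigma> (x t) (s t)" unfolding st by (rule LeastI_ex[OF ex])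
  then have "\<sigma> * s t * rmetric k m R del (x t) ?g ?g \<le> F (x t) - F (x (Suc t))"
    using iter unfolding armijo_cond_def rgd_iter_def by simp
  moreover have "\<sigma> * smin * rmetric k m R del (x t) ?g ?g \<le> \<sigma> * s t * rmetric k m R del (x t) ?g ?g"
    unfolding st using assms(4) rmetric_nonneg[OF del] by (intro mult_right_mono mult_left_mono) auto
  ultimately show ?thesis by linarith
qed

lemma telescope_decrease:
  fixes f a :: "nat \<Rightarrow> real"
  assumes "\<And>t. c * a t \<le> f t - f (Suc t)"
  shows "c * (\<Sum>t<n. a t) \<le> f 0 - f n"
proof (induction n)
  case (Suc n)
  then show ?case using assms[of n] by (simp add: distrib_left)
qed simp

lemma decrease_tendsto_zero:
  fixes f a :: "nat \<Rightarrow> real"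
  assumes "c > 0" "\<And>t. 0 \<le> a t" "\<And>t. c * a t \<le> f t - f (Suc t)" "\<And>t. f_low \<le> f t"
  shows "a \<longlonglongrightarrow> 0"
proof (rule summable_LIMSEQ_zero, rule summableI_nonneg_bounded[where x = "(f 0 - f_low) / c"])
  show "0 \<le> a t" for t by fact
  show "sum a {..<n} \<le> (f 0 - f_low) / c" for n
    using telescope_decrease[where c=c and a=a and f=f and n=n, OF assms(3)] assms(1) assms(4)[of n]
    by (simp add: field_simps)
qed

lemma decrease_complexity:
  fixes f a :: "nat \<Rightarrow> real"
  assumes c: "c > 0" and a: "\<And>t. 0 \<le> a t" and dec: "\<And>t. c * a t \<le> f t - f (Suc t)"
    and low: "\<And>t. f_low \<le> f t" and \<epsilon>: "\<epsilon> > 0"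
  shows "\<exists>t. int t \<le> \<lceil>(f 0 - f_low) / (c * \<epsilon>\<^sup>2)\<rceil> \<and> a t \<le> \<epsilon>\<^sup>2"
proof -
  have c\<epsilon>: "0 < c * \<epsilon>\<^sup>2" using c \<epsilon> by simp
  define N where "N = nat \<lceil>(f 0 - f_low) / (c * \<epsilon>\<^sup>2)\<rceil>"
  have "0 \<le> (f 0 - f_low) / (c * \<epsilon>\<^sup>2)" using low[of 0] c\<epsilon> by simp
  then have N: "int N = \<lceil>(f 0 - f_low) / (c * \<epsilon>\<^sup>2)\<rceil>" unfolding N_def by simp
  have "\<exists>t\<le>N. a t \<le> \<epsilon>\<^sup>2"
  proof (rule ccontr)
    assume "\<not> (\<exists>t\<le>N. a t \<le> \<epsilon>\<^sup>2)"
    then have "(\<Sum>t<Suc N. c * \<epsilon>\<^sup>2) < (\<Sum>t<Suc N. c * a t)"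
      using c by (intro sum_strict_mono) (auto simp: less_Suc_eq_le)
    also have "\<dots> = c * (\<Sum>t<Suc N. a t)" by (rule sum_distrib_left[symmetric])
    also have "\<dots> \<le> f 0 - f_low"
      using telescope_decrease[where c=c and a=a and f=f and n="Suc N", OF dec] low[of "Suc N"] by linarith
    finally have "(f 0 - f_low) / (c * \<epsilon>\<^sup>2) > real N"
      using c\<epsilon> by (simp add: field_simps)
    with N show False by linarith
  qed
  then show ?thesis using N by force
qed

lemma accum_pt_coordwise:
  assumes "accum_pt k m R x y"
  obtains \<phi> where "strict_mono \<phi>" "\<forall>i<k. \<forall>a<m i. \<forall>r<R. (\<lambda>n. x (\<phi> n) i a r) \<longlonglongrightarrow> y i a r"
proof -
  obtain \<phi> where \<phi>: "strict_mono \<phi>" and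
    lim: "(\<lambda>n. fnorm k m R (\<lambda>i a r. x (\<phi> n) i a r - y i a r)) \<longlonglongrightarrow> 0"
    using assms unfolding accum_pt_def by blast
  have "(\<lambda>n. x (\<phi> n) i a r) \<longlonglongrightarrow> y i a r" if "i < k" "a < m i" "r < R" for i a r
  proof -
    have "\<forall>n. norm (x (\<phi> n) i a r - y i a r) \<le> fnorm k m R (\<lambda>i a r. x (\<phi> n) i a r - y i a r)"
    proof
      fix n
      show "norm (x (\<phi> n) i a r - y i a r) \<le> fnorm k m R (\<lambda>i a r. x (\<phi> n) i a r - y i a r)"
        using abs_entry_le_sqrt_frob_sq[where U = "\<lambda>i a r. x (\<phi> n) i a r - y i a r" and k=k and m=m and R=R, OF that]
        unfolding fnorm_def frob_sq_def by simp
    qed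
    from Lim_null_comparison[OF always_eventually[OF this] lim]
    show ?thesis by (simp add: LIM_zero_iff)
  qed
  with \<phi> that show ?thesis by blast
qed

lemma tendsto_entries_of_rmetric:
  assumes del: "del > 0" and lim: "(\<lambda>n. rmetric k m R del (X n) (\<xi> n) (\<xi> n)) \<longlonglongrightarrow> 0"
    and "i < k" "a < m i" "r < R"
  shows "(\<lambda>n. \<xi> n i a r) \<longlonglongrightarrow> 0"
proof -
  have "\<forall>n. norm (\<xi> n i a r) \<le> sqrt (rmetric k m R del (X n) (\<xi> n) (\<xi> n) / del)"
  proof
    fix n
    have "\<bar>\<xi> n i a r\<bar> \<le> sqrt (frob_sq k m R (\<xi> n))" by (rule abs_entry_le_sqrt_frob_sq) fact+
    also have "\<dots> \<le> sqrt (rmetric k m R del (X n) (\<xi> n) (\<xi> n) / del)"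
      using rmetric_ge_frob_sq[of del k m R "\<xi> n" "X n"] del
      by (intro real_sqrt_le_mono) (simp add: field_simps)
    finally show "norm (\<xi> n i a r) \<le> sqrt (rmetric k m R del (X n) (\<xi> n) (\<xi> n) / del)" by simp
  qed
  moreover have "(\<lambda>n. sqrt (rmetric k m R del (X n) (\<xi> n) (\<xi> n) / del)) \<longlonglongrightarrow> 0"
    using tendsto_real_sqrt[OF tendsto_divide[OF lim tendsto_const]] del by simp
  ultimately show ?thesis by (rule Lim_null_comparison[OF always_eventually])
qed

section \<open>Descent of RGD on the completion objective\<close>

context
  fixes k R :: nat and m :: "nat \<Rightarrow> nat"
    and T :: "(nat \<Rightarrow> nat) \<Rightarrow> real" and \<Omega> :: "(nat \<Rightarrow> nat) set"
    and lam del :: real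
  assumes \<Omega>: "\<Omega> \<subseteq> mindex k m" "\<Omega> \<noteq> {}" and lam: "lam > 0" and del: "del > 0"
begin

abbreviation "fobj \<equiv> obj k m R T \<Omega> lam"
abbreviation "rgr U \<equiv> rgrad k m R del fobj U"
abbreviation "ratio \<equiv> sample_ratio k m \<Omega>"

lemma finite_Omega: "finite \<Omega>" using \<Omega> finite_mindex finite_subset by blast

lemma ratio_pos: "0 < ratio" by (rule sample_ratio_pos[OF \<Omega>])

lemma obj_nonneg: "0 \<le> fobj U"
  unfolding obj_eq using ratio_pos lam frob_sq_nonneg
  by (intro add_nonneg_nonneg mult_nonneg_nonneg sum_nonneg) auto

lemma obj_ge_frob_sq: "lam / 2 * frob_sq k m R U \<le> fobj U"
  unfolding obj_eq using ratio_pos by (simp add: sum_nonneg)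

lemma obj_ge_residual_sq: assumes "j \<in> \<Omega>" shows "1 / (2 * ratio) * (cpt k R U j - T j)\<^sup>2 \<le> fobj U"
proof -
  have "(cpt k R U j - T j)\<^sup>2 \<le> (\<Sum>j\<in>\<Omega>. (cpt k R U j - T j)\<^sup>2)"
    using assms finite_Omega by (intro member_le_sum) auto
  then have "1 / (2 * ratio) * (cpt k R U j - T j)\<^sup>2 \<le> 1 / (2 * ratio) * (\<Sum>j\<in>\<Omega>. (cpt k R U j - T j)\<^sup>2)"
    using ratio_pos by (intro mult_left_mono) auto
  moreover have "0 \<le> lam / 2 * frob_sq k m R U" using lam frob_sq_nonneg by simp
  ultimately show ?thesis unfolding obj_eq by linarith
qed

lemma abs_entry_le_of_obj_le:
  assumes "fobj U \<le> Bz" "i < k" "a < m i" "r < R"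
  shows "\<bar>U i a r\<bar> \<le> sqrt (2 * Bz / lam)"
proof -
  have "(U i a r)\<^sup>2 \<le> frob_sq k m R U" by (rule entry_sq_le_frob_sq[where U=U and k=k and m=m and R=R, OF assms(2-4)])
  also have "\<dots> \<le> 2 * Bz / lam" using obj_ge_frob_sq[of U] assms(1) lam by (simp add: field_simps)
  finally show ?thesis by (simp add: real_le_rsqrt)
qed

lemma abs_residual_le_of_obj_le:
  assumes "fobj U \<le> Bz" "j \<in> \<Omega>"
  shows "\<bar>cpt k R U j - T j\<bar> \<le> sqrt (2 * ratio * Bz)"
proof -
  have a: "(cpt k R U j - T j)\<^sup>2 \<le> 2 * ratio * fobj U" using obj_ge_residual_sq[OF assms(2), of U] ratio_pos
    by (simp add: field_simps)
  have "2 * ratio * fobj U \<le> 2 * ratio * Bz" using assms(1) ratio_pos by (intro mult_left_mono) auto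
  then have "(cpt k R U j - T j)\<^sup>2 \<le> 2 * ratio * Bz" using a by linarith
  then show ?thesis by (simp add: real_le_rsqrt)
qed

lemma abs_obj_egrad_le:
  assumes U: "\<forall>i<k. \<forall>a<m i. \<forall>r<R. \<bar>U i a r\<bar> \<le> Bu" and Bu: "1 \<le> Bu"
    and res: "\<forall>j\<in>\<Omega>. \<bar>cpt k R U j - T j\<bar> \<le> B2" and iar: "i < k" "a < m i" "r < R"
  shows "\<bar>obj_egrad k m R T \<Omega> lam U i a r\<bar> \<le> real (card \<Omega>) * B2 * Bu ^ k / ratio + lam * Bu"
proof -
  define P where "P j = (if j i = a then (\<Prod>l\<in>{..<k} - {i}. U l (j l) r) else 0)" for j
  have summand: "\<bar>(cpt k R U j - T j) * P j\<bar> \<le> B2 * Bu ^ k" if j: "j \<in> \<Omega>" for j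
  proof -
    have "\<bar>\<Prod>l\<in>{..<k} - {i}. U l (j l) r\<bar> \<le> Bu ^ card ({..<k} - {i})"
      using U iar(3) mindex_lt[of j k m] j \<Omega>(1) by (intro abs_prod_le_power) auto
    also have "\<dots> \<le> Bu ^ k" using Bu by (intro power_increasing) (auto intro: card_mono[of "{..<k}", simplified])
    finally have "\<bar>P j\<bar> \<le> Bu ^ k" unfolding P_def using Bu by auto
    then show ?thesis using res j unfolding abs_mult by (intro mult_mono) auto
  qed
  have "\<bar>\<Sum>j\<in>\<Omega>. (cpt k R U j - T j) * P j\<bar> \<le> (\<Sum>j\<in>\<Omega>. B2 * Bu ^ k)"
    by (rule order_trans[OF sum_abs sum_mono]) (rule summand)
  then have "1 / ratio * \<bar>\<Sum>j\<in>\<Omega>. (cpt k R U j - T j) * P j\<bar> + lam * \<bar>U i a r\<bar>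
      \<le> 1 / ratio * (real (card \<Omega>) * B2 * Bu ^ k) + lam * Bu"
    using U iar ratio_pos lam by (intro add_mono mult_left_mono) auto
  moreover have "\<bar>obj_egrad k m R T \<Omega> lam U i a r\<bar>
      \<le> 1 / ratio * \<bar>\<Sum>j\<in>\<Omega>. (cpt k R U j - T j) * P j\<bar> + lam * \<bar>U i a r\<bar>"
  proof -
    have "\<bar>obj_egrad k m R T \<Omega> lam U i a r\<bar>
        \<le> \<bar>1 / ratio * (\<Sum>j\<in>\<Omega>. (cpt k R U j - T j) * P j)\<bar> + \<bar>lam * U i a r\<bar>"
      unfolding obj_egrad_def P_def by (rule abs_triangle_ineq)
    then show ?thesis using ratio_pos lam by (simp add: abs_mult)
  qed
  ultimately show ?thesis by simp
qed

lemma rmetric_rgrad_eq: "rmetric k m R del U (rgr U) (rgr U) = (\<Sum>i<k. \<Sum>a<m i. \<Sum>r<R. obj_egrad k m R T \<Omega> lam U i a r * rgr U i a r)"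
proof -
  have "rmetric k m R del U (rgr U) (rgr U) = (\<Sum>i<k. \<Sum>a<m i. \<Sum>r<R. egrad fobj U i a r * rgr U i a r)"
    by (rule grad_eq_rmetric[symmetric], rule rgrad_grad_eq(2)[OF del])
  also have "\<dots> = (\<Sum>i<k. \<Sum>a<m i. \<Sum>r<R. obj_egrad k m R T \<Omega> lam U i a r * rgr U i a r)"
    by (intro sum.cong refl) (simp add: egrad_obj)
  finally show ?thesis .
qed

lemma frob_sq_rgrad_le:
  "frob_sq k m R (rgr U) \<le> frob_sq k m R (obj_egrad k m R T \<Omega> lam U) / del\<^sup>2"
proof -
  let ?e = "obj_egrad k m R T \<Omega> lam U"
  have pw: "?e i a r * rgr U i a r \<le> (?e i a r)\<^sup>2 / (2 * del) + del / 2 * (rgr U i a r)\<^sup>2" for i a r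
  proof -
    have "0 \<le> (?e i a r - del * rgr U i a r)\<^sup>2 / (2 * del)" using del by simp
    then show ?thesis using del by (simp add: power2_eq_square field_simps)
  qed
  have "del * frob_sq k m R (rgr U) \<le> rmetric k m R del U (rgr U) (rgr U)" by (rule rmetric_ge_frob_sq)
  also have "\<dots> \<le> (\<Sum>i<k. \<Sum>a<m i. \<Sum>r<R. (?e i a r)\<^sup>2 / (2 * del) + del / 2 * (rgr U i a r)\<^sup>2)"
    unfolding rmetric_rgrad_eq by (intro sum_mono pw)
  also have "\<dots> = frob_sq k m R ?e / (2 * del) + del / 2 * frob_sq k m R (rgr U)"
    unfolding frob_sq_def by (simp add: sum.distrib sum_distrib_left sum_divide_distrib)
  finally have "del / 2 * frob_sq k m R (rgr U) \<le> frob_sq k m R ?e / (2 * del)" by simp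
  then show ?thesis using del by (simp add: field_simps power2_eq_square)
qed

lemma obj_dderiv_neg_rgrad: "obj_dderiv k m R T \<Omega> lam U (pneg (rgr U)) = - rmetric k m R del U (rgr U) (rgr U)"
  unfolding obj_egrad_inner[OF \<Omega>(1) finite_Omega, symmetric] rmetric_rgrad_eq pneg_def
  by (simp add: sum_negf)

lemma sublevel_bounds:
  "\<exists>B B2. 1 \<le> B \<and> (\<forall>U. fobj U \<le> Bz \<longrightarrow>
     (\<forall>i<k. \<forall>a<m i. \<forall>r<R. \<bar>U i a r\<bar> \<le> B) \<and> (\<forall>j\<in>\<Omega>. \<bar>cpt k R U j - T j\<bar> \<le> B2) \<and>
     sqrt (frob_sq k m R (rgr U)) \<le> B)"
proof -
  define Bu where "Bu = max 1 (sqrt (2 * Bz / lam))"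
  define B2 where "B2 = sqrt (2 * ratio * Bz)"
  define Be where "Be = real (card \<Omega>) * B2 * Bu ^ k / ratio + lam * Bu"
  define Bg where "Bg = sqrt ((\<Sum>i<k. real (m i) * R) * Be\<^sup>2 / del\<^sup>2)"
  have "1 \<le> max Bu Bg" unfolding Bu_def by simp
  moreover have "(\<forall>i<k. \<forall>a<m i. \<forall>r<R. \<bar>U i a r\<bar> \<le> max Bu Bg) \<and> (\<forall>j\<in>\<Omega>. \<bar>cpt k R U j - T j\<bar> \<le> B2)
      \<and> sqrt (frob_sq k m R (rgr U)) \<le> max Bu Bg" if FU: "fobj U \<le> Bz" for U
  proof (intro conjI)
    have U: "\<forall>i<k. \<forall>a<m i. \<forall>r<R. \<bar>U i a r\<bar> \<le> Bu"
      using abs_entry_le_of_obj_le[OF FU] unfolding Bu_def by (meson max.cobounded2 order_trans)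
    then show "\<forall>i<k. \<forall>a<m i. \<forall>r<R. \<bar>U i a r\<bar> \<le> max Bu Bg" by (meson max.coboundedI1)
    show res: "\<forall>j\<in>\<Omega>. \<bar>cpt k R U j - T j\<bar> \<le> B2"
      using abs_residual_le_of_obj_le[OF FU] unfolding B2_def by auto
    have "\<forall>i<k. \<forall>a<m i. \<forall>r<R. \<bar>obj_egrad k m R T \<Omega> lam U i a r\<bar> \<le> Be"
      using abs_obj_egrad_le[OF U _ res] unfolding Be_def Bu_def by auto
    then have "frob_sq k m R (rgr U) \<le> (\<Sum>i<k. real (m i) * R) * Be\<^sup>2 / del\<^sup>2"
      using order_trans[OF frob_sq_rgrad_le[of U] divide_right_mono[OF frob_sq_le_of_abs_le]] by simp
    then show "sqrt (frob_sq k m R (rgr U)) \<le> max Bu Bg"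
      unfolding Bg_def by (simp add: real_sqrt_le_mono max.coboundedI2)
  qed
  ultimately show ?thesis by blast
qed

text \<open>Since \<open>\<delta> \<bar>\<xi>\<bar>\<^sup>2 \<le> \<parallel>\<xi>\<parallel>\<^sup>2\<close>, the second-order term of a step \<open>s\<close> along \<open>-grad f\<close>
  is at most \<open>s\<^sup>2 M \<parallel>grad f\<parallel>\<^sup>2 / \<delta>\<close> on a sublevel set, and is absorbed by the first-order
  gain \<open>s \<parallel>grad f\<parallel>\<^sup>2\<close> once \<open>s \<le> \<delta> / (2M)\<close>.\<close>

lemma obj_sufficient_decrease:
  "\<exists>sh>0. \<exists>c>0. \<forall>U. fobj U \<le> Bz \<longrightarrow>
     fobj (pmove U (pneg (rgr U)) sh) \<le> fobj U - c * rmetric k m R del U (rgr U) (rgr U)"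
proof -
  obtain B B2 where B: "1 \<le> B" and bounds: "\<And>U. fobj U \<le> Bz \<Longrightarrow>
      (\<forall>i<k. \<forall>a<m i. \<forall>r<R. \<bar>U i a r\<bar> \<le> B) \<and> (\<forall>j\<in>\<Omega>. \<bar>cpt k R U j - T j\<bar> \<le> B2) \<and>
      sqrt (frob_sq k m R (rgr U)) \<le> B"
    using sublevel_bounds[of Bz] by blast
  define M where "M = max 1 (obj_curv_const k m R \<Omega> lam B B2)"
  define sh where "sh = min 1 (del / (2 * M))"
  have M: "1 \<le> M" "obj_curv_const k m R \<Omega> lam B B2 \<le> M" unfolding M_def by simp_all
  have sh: "0 < sh" "sh \<le> 1" "sh * M \<le> del / 2"
    using del M unfolding sh_def by (auto simp: field_simps min_def)
  have "fobj (pmove U (pneg (rgr U)) sh) \<le> fobj U - sh / 2 * rmetric k m R del U (rgr U) (rgr U)"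
    if FU: "fobj U \<le> Bz" for U
  proof -
    define g where "g = rmetric k m R del U (rgr U) (rgr U)"
    define \<delta> where "\<delta> = sqrt (frob_sq k m R (rgr U))"
    have \<delta>: "0 \<le> \<delta>" "\<delta>\<^sup>2 = frob_sq k m R (pneg (rgr U))"
      unfolding \<delta>_def using frob_sq_nonneg by simp_all
    have D: "\<forall>i<k. \<forall>a<m i. \<forall>r<R. \<bar>pneg (rgr U) i a r\<bar> \<le> \<delta>"
      unfolding \<delta>_def using abs_entry_le_sqrt_frob_sq by (metis frob_sq_pneg)
    have "fobj (pmove U (pneg (rgr U)) sh) \<le> fobj U + sh * obj_dderiv k m R T \<Omega> lam U (pneg (rgr U))
        + sh\<^sup>2 * \<delta>\<^sup>2 * obj_curv_const k m R \<Omega> lam B B2"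
      by (rule obj_line_upper_bound[OF \<Omega> less_imp_le[OF lam]]) (use bounds[OF FU] D sh \<delta> B \<delta>_def in auto)
    also have "\<dots> = fobj U - sh * g + sh\<^sup>2 * \<delta>\<^sup>2 * obj_curv_const k m R \<Omega> lam B B2"
      unfolding obj_dderiv_neg_rgrad g_def by simp
    also have "sh\<^sup>2 * \<delta>\<^sup>2 * obj_curv_const k m R \<Omega> lam B B2 \<le> sh * (sh * M) * (g / del)"
    proof -
      have "\<delta>\<^sup>2 \<le> g / del"
        using rmetric_ge_frob_sq[of del k m R "rgr U" U] del \<delta>(2) unfolding g_def by (simp add: field_simps)
      have "sh\<^sup>2 * \<delta>\<^sup>2 * obj_curv_const k m R \<Omega> lam B B2 \<le> sh\<^sup>2 * \<delta>\<^sup>2 * M"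
        using M by (intro mult_left_mono) auto
      also have "\<dots> \<le> sh\<^sup>2 * (g / del) * M"
        using \<open>\<delta>\<^sup>2 \<le> g / del\<close> M by (intro mult_right_mono mult_left_mono) auto
      finally show ?thesis by (simp add: power2_eq_square mult_ac)
    qed
    also have "sh * (sh * M) * (g / del) \<le> sh * (del / 2) * (g / del)"
      using sh rmetric_nonneg[OF del] del unfolding g_def by (intro mult_right_mono mult_left_mono) auto
    finally show ?thesis using del unfolding g_def by simp
  qed
  then show ?thesis using sh(1) by (intro exI[of _ sh] conjI exI[of _ "sh / 2"]) auto
qed

lemma linemin_rule_decrease:
  assumes iter: "rgd_iter k m R del fobj x s" and linemin: "linemin_rule k m R del fobj x s"
  shows "\<exists>c>0. \<forall>t. c * rmetric k m R del (x t) (rgr (x t)) (rgr (x t)) \<le> fobj (x t) - fobj (x (Suc t))"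
proof -
  obtain sh c where "sh > 0" "c > 0" and dec: "\<And>U. fobj U \<le> fobj (x 0) \<Longrightarrow>
      fobj (pmove U (pneg (rgr U)) sh) \<le> fobj U - c * rmetric k m R del U (rgr U) (rgr U)"
    using obj_sufficient_decrease[of "fobj (x 0)"] by blast
  have step: "fobj (x (Suc t)) \<le> fobj (pmove (x t) (pneg (rgr (x t))) sh)" for t
    using iter linemin \<open>sh > 0\<close> unfolding linemin_rule_def rgd_iter_def by auto
  have gain: "0 \<le> c * rmetric k m R del U (rgr U) (rgr U)" for U
    using \<open>c > 0\<close> rmetric_nonneg[OF del] by simp
  have below: "fobj (x t) \<le> fobj (x 0)" for t
  proof (induction t)
    case (Suc t)
    then show ?case using step[of t] dec[OF Suc] gain[of "x t"] by linarith
  qed simp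
  show ?thesis
  proof (intro exI[of _ c] conjI allI)
    fix t
    show "c * rmetric k m R del (x t) (rgr (x t)) (rgr (x t)) \<le> fobj (x t) - fobj (x (Suc t))"
      using step[of t] dec[OF below[of t]] by linarith
  qed (fact \<open>c > 0\<close>)
qed

lemma rgd_sufficient_decrease:
  assumes iter: "rgd_iter k m R del fobj x s"
    and rule: "linemin_rule k m R del fobj x s \<or>
       (\<exists>\<sigma> \<beta> smin. 0 < \<sigma> \<and> \<sigma> < 1 \<and> 0 < \<beta> \<and> \<beta> < 1 \<and> 0 < smin \<and>
          armijo_rule k m R del fobj \<sigma> \<beta> smin x s)"
  shows "\<exists>c>0. \<forall>t. c * rmetric k m R del (x t) (rgr (x t)) (rgr (x t)) \<le> fobj (x t) - fobj (x (Suc t))"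
  using rule
proof
  assume "\<exists>\<sigma> \<beta> smin. 0 < \<sigma> \<and> \<sigma> < 1 \<and> 0 < \<beta> \<and> \<beta> < 1 \<and> 0 < smin \<and>
          armijo_rule k m R del fobj \<sigma> \<beta> smin x s"
  then obtain \<sigma> \<beta> smin where "0 < \<sigma>" "0 < smin" "armijo_rule k m R del fobj \<sigma> \<beta> smin x s"
    by blast
  then show ?thesis
    using armijo_rule_decrease[OF del iter] by (intro exI[of _ "\<sigma> * smin"]) auto
qed (use linemin_rule_decrease[OF iter] in blast)

lemma accum_pt_stationary:
  assumes lim: "(\<lambda>t. rmetric k m R del (x t) (rgr (x t)) (rgr (x t))) \<longlonglongrightarrow> 0"
    and acc: "accum_pt k m R x y"
  shows "rgr y = (\<lambda>i a r. 0)"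
proof -
  obtain \<phi> where \<phi>: "strict_mono \<phi>" and conv: "\<forall>i<k. \<forall>a<m i. \<forall>r<R. (\<lambda>n. x (\<phi> n) i a r) \<longlonglongrightarrow> y i a r"
    using accum_pt_coordwise[OF acc] by blast
  have "obj_egrad k m R T \<Omega> lam y i a r = 0" if ir: "i < k" "a < m i" "r < R" for i a r
  proof -
    have "(\<lambda>n. rgr (x (\<phi> n)) i a r') \<longlonglongrightarrow> 0" if "r' < R" for r'
      using tendsto_entries_of_rmetric[OF del LIMSEQ_subseq_LIMSEQ[OF lim \<phi>, unfolded o_def] ir(1,2) that] .
    then have "(\<lambda>n. \<Sum>r'<R. rgr (x (\<phi> n)) i a r' * Hmat k m del (x (\<phi> n)) i r' r)
        \<longlonglongrightarrow> (\<Sum>r'<R. 0 * Hmat k m del y i r' r)"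
      using ir by (intro tendsto_sum tendsto_mult tendsto_Hmat[OF conv]) auto
    moreover have "(\<Sum>r'<R. rgr (x (\<phi> n)) i a r' * Hmat k m del (x (\<phi> n)) i r' r)
        = obj_egrad k m R T \<Omega> lam (x (\<phi> n)) i a r" for n
      using rgrad_grad_eq(2)[OF del] ir unfolding grad_eq_def by (simp add: egrad_obj)
    ultimately have "(\<lambda>n. obj_egrad k m R T \<Omega> lam (x (\<phi> n)) i a r) \<longlonglongrightarrow> 0" by simp
    with tendsto_obj_egrad[OF conv \<Omega>(1) ir] show ?thesis by (rule LIMSEQ_unique)
  qed
  then show ?thesis
    by (intro rgrad_eqI[OF del]) (auto simp: mpts_def grad_eq_def egrad_obj)
qed

end

theorem proposition4p3:
  fixes k R :: nat and m :: "nat \<Rightarrow> nat"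
    and T :: "(nat \<Rightarrow> nat) \<Rightarrow> real" and \<Omega> :: "(nat \<Rightarrow> nat) set"
    and lam del :: real and x :: "nat \<Rightarrow> pt" and s :: "nat \<Rightarrow> real"
  assumes k: "2 \<le> k" and R: "1 \<le> R" and m: "\<forall>i<k. 1 \<le> m i"
    and \<Omega>: "\<Omega> \<subseteq> mindex k m" "\<Omega> \<noteq> {}"
    and lam: "lam > 0" and del: "del > 0"
    and iter: "rgd_iter k m R del (obj k m R T \<Omega> lam) x s"
    and rule: "linemin_rule k m R del (obj k m R T \<Omega> lam) x s \<or>
       (\<exists>\<sigma> \<beta> smin. 0 < \<sigma> \<and> \<sigma> < 1 \<and> 0 < \<beta> \<and> \<beta> < 1 \<and> 0 < smin \<and>
          armijo_rule k m R del (obj k m R T \<Omega> lam) \<sigma> \<beta> smin x s)"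
  shows "(\<forall>y. accum_pt k m R x y \<longrightarrow>
            rgrad k m R del (obj k m R T \<Omega> lam) y = (\<lambda>i a r. 0))
    \<and> (\<exists>C>0. \<forall>\<epsilon>>0. \<exists>t::nat.
          int t \<le> \<lceil>(obj k m R T \<Omega> lam (x 0) - (INF U\<in>mpts k m R. obj k m R T \<Omega> lam U))
                    / (C * \<epsilon>\<^sup>2)\<rceil> \<and>
          rnorm k m R del (x t) (rgrad k m R del (obj k m R T \<Omega> lam) (x t)) \<le> \<epsilon>)"
proof -
  let ?F = "obj k m R T \<Omega> lam"
  define gn where "gn t = rmetric k m R del (x t) (rgrad k m R del ?F (x t)) (rgrad k m R del ?F (x t))" for t
  define f_inf where "f_inf = (INF U\<in>mpts k m R. ?F U)"
  have gn: "0 \<le> gn t" for t unfolding gn_def by (rule rmetric_nonneg[OF del])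
  obtain c where c: "c > 0" and dec: "\<And>t. c * gn t \<le> ?F (x t) - ?F (x (Suc t))"
    using rgd_sufficient_decrease[OF \<Omega> lam del iter rule] unfolding gn_def by blast
  have low: "f_inf \<le> ?F (x t)" for t
    unfolding f_inf_def using obj_nonneg[OF \<Omega> lam del] rgd_iter_mpts[OF del iter]
    by (intro cINF_lower bdd_belowI2) auto
  have "sqrt (gn t) \<le> \<epsilon>" if "gn t \<le> \<epsilon>\<^sup>2" "\<epsilon> > 0" for t \<epsilon>
    using real_sqrt_le_mono[OF that(1)] that(2) by simp
  then have "\<exists>t. int t \<le> \<lceil>(?F (x 0) - f_inf) / (c * \<epsilon>\<^sup>2)\<rceil> \<and> sqrt (gn t) \<le> \<epsilon>" if "\<epsilon> > 0" for \<epsilon>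
    using decrease_complexity[where f = "\<lambda>t. ?F (x t)", OF c gn dec low that] that by blast
  moreover have "gn \<longlonglongrightarrow> 0"
    by (rule decrease_tendsto_zero[where f = "\<lambda>t. ?F (x t)", OF c gn dec low])
  then have "rgrad k m R del ?F y = (\<lambda>i a r. 0)" if "accum_pt k m R x y" for y
    using accum_pt_stationary[OF \<Omega> lam del _ that] unfolding gn_def by blast
  ultimately show ?thesis using c unfolding rnorm_def gn_def f_inf_def by blast
qed

end
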